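(* Let $\mu^\star_0,\mu^\star_1$ be any probability measures on $\mathbb{R}^d$ with finite second moment. Then any coupling $(Y_0,Y_1)$ of $\mu^\star_0$ and $\mu^\star_1$ induces an optimal solution $(Y_t)_{t\in[0,1]}$ of the P-spline problem with data $\mu^\star_0,\mu^\star_1$ at times $0,1$, whose values at times $0$ and $1$ are $Y_0$ and $Y_1$.
   Context: The P-spline problem with data $\mu^\star_{t_0},\dots,\mu^\star_{t_N}$ at times $0=t_0<\dots<t_N=1$ is $\inf_{(Y_t)}\int_0^1\mathbb E[\|\ddot Y_t\|^2]\,dt$ over stochastic processes $(Y_t)_{t\in[0,1]}$ in $\mathbb{R}^d$ with twice differentiable paths and $Y_{t_i}\sim\mu^\star_{t_i}$ for all $i$. *)

theory Defs
  imports "HOL-Probability.Probability"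
begin

definition twice_diff_paths :: "(real \<Rightarrow> 'c \<Rightarrow> 'b::real_normed_vector) \<Rightarrow> 'c measure \<Rightarrow> bool" where
  "twice_diff_paths Y M \<longleftrightarrow>
     (\<forall>\<omega>\<in>space M. \<exists>f' f''. \<forall>t\<in>{0..1}.
        ((\<lambda>s. Y s \<omega>) has_vector_derivative f' t) (at t within {0..1}) \<and>
        (f' has_vector_derivative f'' t) (at t within {0..1}))"

definition ddot :: "(real \<Rightarrow> 'c \<Rightarrow> 'b::real_normed_vector) \<Rightarrow> 'c \<Rightarrow> real \<Rightarrow> 'b" where
  "ddot Y \<omega> t = vector_derivative
      (\<lambda>s. vector_derivative (\<lambda>r. Y r \<omega>) (at s within {0..1})) (at t within {0..1})"

definition pspline_cost :: "'c measure \<Rightarrow> (real \<Rightarrow> 'c \<Rightarrow> 'b::real_normed_vector) \<Rightarrow> ennreal" where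
  "pspline_cost M Y =
     (\<integral>\<^sup>+ t. indicator {0..1::real} t * (\<integral>\<^sup>+ \<omega>. ennreal ((norm (ddot Y \<omega> t))\<^sup>2) \<partial>M) \<partial>lborel)"

definition pspline_feasible ::
  "'b::euclidean_space measure \<Rightarrow> 'b measure \<Rightarrow> 'c measure \<Rightarrow> (real \<Rightarrow> 'c \<Rightarrow> 'b) \<Rightarrow> bool" where
  "pspline_feasible \<mu>0 \<mu>1 M Y \<longleftrightarrow>
     prob_space M \<and> (\<forall>t\<in>{0..1}. Y t \<in> borel_measurable M) \<and> twice_diff_paths Y M \<and>
     distr M borel (Y 0) = \<mu>0 \<and> distr M borel (Y 1) = \<mu>1"

end

theory Submission
  imports Defs
begin

text \<open>The straight-line interpolation \<open>Y\<^sub>t = Y\<^sub>0 + t (Y\<^sub>1 - Y\<^sub>0)\<close> of the coupling has identically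
  vanishing acceleration, so its cost is \<open>0\<close>, which bounds every \<open>ennreal\<close>-valued cost from
  below.\<close>

definition linear_interpolation :: "('c \<Rightarrow> 'b) \<Rightarrow> ('c \<Rightarrow> 'b) \<Rightarrow> real \<Rightarrow> 'c \<Rightarrow> 'b::real_normed_vector"
  where "linear_interpolation Y0 Y1 t \<omega> = Y0 \<omega> + t *\<^sub>R (Y1 \<omega> - Y0 \<omega>)"

lemma linear_interpolation_0 [simp]: "linear_interpolation Y0 Y1 0 = Y0"
  and linear_interpolation_1 [simp]: "linear_interpolation Y0 Y1 1 = Y1"
  by (auto simp: linear_interpolation_def)

lemma has_vector_derivative_linear_interpolation:
  "((\<lambda>s. linear_interpolation Y0 Y1 s \<omega>) has_vector_derivative (Y1 \<omega> - Y0 \<omega>)) (at t within S)"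
  unfolding linear_interpolation_def by (auto intro!: derivative_eq_intros)

lemma vector_derivative_linear_interpolation:
  fixes Y0 Y1 :: "'c \<Rightarrow> 'b::euclidean_space"
  assumes "a < b" "t \<in> {a..b}"
  shows "vector_derivative (\<lambda>s. linear_interpolation Y0 Y1 s \<omega>) (at t within {a..b}) = Y1 \<omega> - Y0 \<omega>"
  using assms by (intro vector_derivative_within_closed_interval has_vector_derivative_linear_interpolation)

lemma ddot_linear_interpolation:
  fixes Y0 Y1 :: "'c \<Rightarrow> 'b::euclidean_space"
  assumes "t \<in> {0..1}"
  shows "ddot (linear_interpolation Y0 Y1) \<omega> t = 0"
proof -
  have "((\<lambda>s. Y1 \<omega> - Y0 \<omega>) has_vector_derivative 0) (at t within {0..1})"
    by simp
  then have "((\<lambda>s. vector_derivative (\<lambda>r. linear_interpolation Y0 Y1 r \<omega>) (at s within {0..1}))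
      has_vector_derivative 0) (at t within {0..1})"
    by (rule has_vector_derivative_transform_within[where d = 1])
      (use assms in \<open>auto simp: vector_derivative_linear_interpolation\<close>)
  then show ?thesis
    unfolding ddot_def using assms by (intro vector_derivative_within_closed_interval) auto
qed

lemma pspline_cost_linear_interpolation:
  fixes Y0 Y1 :: "'c \<Rightarrow> 'b::euclidean_space"
  shows "pspline_cost M (linear_interpolation Y0 Y1) = 0"
proof -
  have "(\<lambda>t. indicator {0..1} t *
      (\<integral>\<^sup>+ \<omega>. ennreal ((norm (ddot (linear_interpolation Y0 Y1) \<omega> t))\<^sup>2) \<partial>M)) = (\<lambda>t. 0)"
    by (auto simp: ddot_linear_interpolation indicator_def)
  then show ?thesis
    unfolding pspline_cost_def by simp
qed

lemma twice_diff_paths_linear_interpolation: "twice_diff_paths (linear_interpolation Y0 Y1) M"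
  unfolding twice_diff_paths_def
proof
  fix \<omega>
  show "\<exists>f' f''. \<forall>t\<in>{0..1}.
      ((\<lambda>s. linear_interpolation Y0 Y1 s \<omega>) has_vector_derivative f' t) (at t within {0..1}) \<and>
      (f' has_vector_derivative f'' t) (at t within {0..1})"
    by (intro exI[of _ "\<lambda>t. Y1 \<omega> - Y0 \<omega>"] exI[of _ "\<lambda>t. 0"])
      (simp add: has_vector_derivative_linear_interpolation)
qed

lemma pspline_feasible_linear_interpolation:
  assumes "prob_space M" "Y0 \<in> borel_measurable M" "Y1 \<in> borel_measurable M"
    and "distr M borel Y0 = \<mu>0" "distr M borel Y1 = \<mu>1"
  shows "pspline_feasible \<mu>0 \<mu>1 M (linear_interpolation Y0 Y1)"
  using assms twice_diff_paths_linear_interpolation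
  by (auto simp: pspline_feasible_def linear_interpolation_def[abs_def])

theorem proposition4:
  fixes \<mu>0 \<mu>1 :: "'b::euclidean_space measure"
    and M :: "'a measure"
    and Y0 Y1 :: "'a \<Rightarrow> 'b"
  assumes "prob_space \<mu>0" "sets \<mu>0 = sets borel" "(\<integral>\<^sup>+ x. ennreal ((norm x)\<^sup>2) \<partial>\<mu>0) < \<infinity>"
    and "prob_space \<mu>1" "sets \<mu>1 = sets borel" "(\<integral>\<^sup>+ x. ennreal ((norm x)\<^sup>2) \<partial>\<mu>1) < \<infinity>"
    and "prob_space M"
    and "Y0 \<in> borel_measurable M" "Y1 \<in> borel_measurable M"
    and "distr M borel Y0 = \<mu>0" "distr M borel Y1 = \<mu>1"
  shows "\<exists>Y. pspline_feasible \<mu>0 \<mu>1 M Y \<and>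
             (\<forall>\<omega>\<in>space M. Y 0 \<omega> = Y0 \<omega> \<and> Y 1 \<omega> = Y1 \<omega>) \<and>
             (\<forall>(M' :: 'c measure) Z. pspline_feasible \<mu>0 \<mu>1 M' Z \<longrightarrow>
                 pspline_cost M Y \<le> pspline_cost M' Z)"
proof (intro exI conjI)
  show "pspline_feasible \<mu>0 \<mu>1 M (linear_interpolation Y0 Y1)"
    using assms(7-11) by (rule pspline_feasible_linear_interpolation)
qed (simp_all add: pspline_cost_linear_interpolation)

end
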